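(* Let $k\ge 2$ be an integer and $a>0$. Let $L=L_a$ be the $k\times k$ lower bidiagonal matrix with all diagonal entries equal to $a$, all entries directly below the diagonal equal to $-a$, and all other entries $0$. (This is the reduced graph Laplacian of the hierarchical-leadership flock $[0,1,\dots,k]$ in which each agent $i>0$ is led only by agent $i-1$, at an instant when $a_{i,i-1}=a$ for all $i>0$.) Then the smallest eigenvalue of $L$ is $\xi=a$, but there exists no inner product $\langle\cdot,\cdot\rangle$ on $\mathbb{R}^k$ such that \[\langle Lv,v\rangle\ge a\langle v,v\rangle\qquad\text{for all } v\in\mathbb{R}^k.\]
   Context: The reduced Laplacian of a flock $[0,1,\dots,k]$ with connectivity coefficients $a_{ij}\ge 0$ is the restriction of $D-K$ (with $K=(a_{ij})_{0\le i,j\le k}$, $D=\mathrm{diag}(d_0,\dots,d_k)$, $d_i=\sum_j a_{ij}$) to the coordinates $1,\dots,k$; for the chain described in the claim it is exactly the matrix $L_a$ given there. *)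

theory Defs
  imports "Jordan_Normal_Form.Matrix" "Jordan_Normal_Form.Char_Poly"
begin

definition L_mat :: "nat \<Rightarrow> real \<Rightarrow> real mat" where
  "L_mat k a = mat k k (\<lambda>(i, j). if i = j then a else if i = Suc j then - a else 0)"

definition is_inner_product :: "nat \<Rightarrow> (real vec \<Rightarrow> real vec \<Rightarrow> real) \<Rightarrow> bool" where
  "is_inner_product k ip \<longleftrightarrow>
     (\<forall>u \<in> carrier_vec k. \<forall>v \<in> carrier_vec k. \<forall>w \<in> carrier_vec k. \<forall>c.
        ip (u + v) w = ip u w + ip v w \<and> ip (c \<cdot>\<^sub>v u) w = c * ip u w \<and> ip u v = ip v u) \<and>
     (\<forall>v \<in> carrier_vec k. v \<noteq> 0\<^sub>v k \<longrightarrow> ip v v > 0)"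

end

theory Submission
  imports Defs
begin

text \<open>
  Since L is lower triangular with constant diagonal a, its only eigenvalue is a.
  Nevertheless a - L is a nonzero nilpotent (a times the shift), so no inner product makes it
  negative semidefinite: for the unit vectors u = e(k-2) and w = e(k-1) the vector v = u + t w satisfies
  L v = a v - a w, hence \<langle>L v, v\<rangle> - a \<langle>v, v\<rangle> = - a \<langle>w, v\<rangle>, and t can be chosen so that
  \<langle>w, v\<rangle> = \<langle>w, w\<rangle> > 0.
\<close>

lemma eigenvalue_lower_triangular_iff:
  fixes A :: "'a::field mat"
  assumes A: "A \<in> carrier_mat n n"
    and lower: "\<And>i j. i < j \<Longrightarrow> j < n \<Longrightarrow> A $$ (i, j) = 0"
  shows "eigenvalue A e \<longleftrightarrow> e \<in> set (diag_mat A)"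
proof -
  have "det (char_matrix A e) = prod_list (diag_mat (char_matrix A e))"
    using A lower by (intro det_lower_triangular[of n]) (auto simp: char_matrix_def)
  also have "diag_mat (char_matrix A e) = map (\<lambda>x. x - e) (diag_mat A)"
    using A by (intro nth_equalityI) (auto simp: diag_mat_def char_matrix_def)
  finally show ?thesis
    unfolding eigenvalue_det[OF A] by (auto simp: prod_list_zero_iff)
qed

lemma diag_mat_of_real_L_mat:
  "diag_mat (map_mat of_real (L_mat k a)) = replicate k (of_real a :: 'a::real_algebra_1)"
  by (intro nth_equalityI) (auto simp: diag_mat_def L_mat_def)

lemma eigenvalue_of_real_L_mat_iff:
  assumes "k > 0"
  shows "eigenvalue (map_mat complex_of_real (L_mat k a)) mu \<longleftrightarrow> mu = complex_of_real a"
proof -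
  have "eigenvalue (map_mat complex_of_real (L_mat k a)) mu \<longleftrightarrow>
      mu \<in> set (diag_mat (map_mat complex_of_real (L_mat k a)))"
    by (intro eigenvalue_lower_triangular_iff[of _ k]) (auto simp: L_mat_def)
  then show ?thesis
    using assms by (simp add: diag_mat_of_real_L_mat)
qed

lemma L_mat_mult_vec_nth:
  assumes "v \<in> carrier_vec k" "i < k"
  shows "(L_mat k a *\<^sub>v v) $ i = a * v $ i - (if i = 0 then 0 else a * v $ (i - 1))"
proof -
  have "(L_mat k a *\<^sub>v v) $ i =
      (\<Sum>j<k. (if i = j then a * v $ j else 0) + (if i = Suc j then - a * v $ j else 0))"
    using assms unfolding L_mat_def mult_mat_vec_def scalar_prod_def
    by (auto simp: lessThan_atLeast0 intro!: sum.cong)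
  also have "\<dots> = a * v $ i + (\<Sum>j<k. if i = Suc j then - a * v $ j else 0)"
    using assms(2) by (simp add: sum.distrib sum.delta)
  also have "(\<Sum>j<k. if i = Suc j then - a * v $ j else 0) =
      (if i = 0 then 0 else - a * v $ (i - 1))"
    using assms(2) by (cases i) (simp_all add: sum.delta)
  finally show ?thesis
    by simp
qed

lemma L_mat_mult_vec_last_two:
  assumes "k \<ge> 2"
  defines "u \<equiv> unit_vec k (k - 2)" and "w \<equiv> unit_vec k (k - 1)"
  shows "L_mat k a *\<^sub>v (u + t \<cdot>\<^sub>v w) = a \<cdot>\<^sub>v (u + t \<cdot>\<^sub>v w) + (- a) \<cdot>\<^sub>v w"
proof (rule eq_vecI)
  fix i
  assume "i < dim_vec (a \<cdot>\<^sub>v (u + t \<cdot>\<^sub>v w) + (- a) \<cdot>\<^sub>v w)"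
  then have "i < k"
    by (simp add: u_def w_def)
  then show "(L_mat k a *\<^sub>v (u + t \<cdot>\<^sub>v w)) $ i = (a \<cdot>\<^sub>v (u + t \<cdot>\<^sub>v w) + (- a) \<cdot>\<^sub>v w) $ i"
    using assms(1)
    by (subst L_mat_mult_vec_nth[of _ k]) (auto simp: u_def w_def algebra_simps)
qed (simp add: w_def L_mat_def)

lemma ex_L_mat_form_less_eigenvalue:
  assumes "k \<ge> 2" and "a > 0" and ip: "is_inner_product k ip"
  shows "\<exists>v \<in> carrier_vec k. ip (L_mat k a *\<^sub>v v) v < a * ip v v"
proof -
  define u where "u = (unit_vec k (k - 2) :: real vec)"
  define w where "w = (unit_vec k (k - 1) :: real vec)"
  have u: "u \<in> carrier_vec k" and w: "w \<in> carrier_vec k"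
    by (simp_all add: u_def w_def)
  have add: "\<And>x y z. x \<in> carrier_vec k \<Longrightarrow> y \<in> carrier_vec k \<Longrightarrow> z \<in> carrier_vec k \<Longrightarrow>
      ip (x + y) z = ip x z + ip y z"
    and smult: "\<And>x z c. x \<in> carrier_vec k \<Longrightarrow> z \<in> carrier_vec k \<Longrightarrow> ip (c \<cdot>\<^sub>v x) z = c * ip x z"
    and sym: "\<And>x z. x \<in> carrier_vec k \<Longrightarrow> z \<in> carrier_vec k \<Longrightarrow> ip x z = ip z x"
    using ip unfolding is_inner_product_def by blast+
  have "w $ (k - 1) = 1"
    using assms(1) by (simp add: w_def)
  then have "w \<noteq> 0\<^sub>v k"
    using assms(1) by auto
  then have ww: "ip w w > 0"
    using ip w unfolding is_inner_product_def by blast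
  define v where "v = u + (1 - ip u w / ip w w) \<cdot>\<^sub>v w"
  have v: "v \<in> carrier_vec k"
    by (simp add: v_def u w)
  have "ip w v = ip v w"
    using sym v w by blast
  also have "\<dots> = ip u w + (1 - ip u w / ip w w) * ip w w"
    by (simp add: v_def add smult u w)
  also have "\<dots> = ip w w"
    using ww by (simp add: field_simps)
  finally have wv: "ip w v = ip w w" .
  have "L_mat k a *\<^sub>v v = a \<cdot>\<^sub>v v + (- a) \<cdot>\<^sub>v w"
    unfolding v_def u_def w_def by (rule L_mat_mult_vec_last_two[OF assms(1)])
  then have "ip (L_mat k a *\<^sub>v v) v = ip (a \<cdot>\<^sub>v v + (- a) \<cdot>\<^sub>v w) v"
    by simp
  also have "\<dots> = a * ip v v - a * ip w w"
    using v w by (simp add: add smult wv)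
  also have "\<dots> < a * ip v v"
    using assms(2) ww by simp
  finally show ?thesis
    using v by blast
qed

theorem theorem1:
  fixes k :: nat and a :: real
  assumes "k \<ge> 2" and "a > 0"
  shows "(eigenvalue (map_mat complex_of_real (L_mat k a)) (complex_of_real a) \<and>
          (\<forall>mu. eigenvalue (map_mat complex_of_real (L_mat k a)) mu \<longrightarrow> mu \<in> \<real> \<and> a \<le> Re mu)) \<and>
         \<not> (\<exists>ip. is_inner_product k ip \<and>
               (\<forall>v \<in> carrier_vec k. ip (L_mat k a *\<^sub>v v) v \<ge> a * ip v v))"
  using assms eigenvalue_of_real_L_mat_iff[of k a] ex_L_mat_form_less_eigenvalue[of k a]
  by (auto simp: not_le)

end
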